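(* Let $m\ge2$ be an integer and let $1<p_1,\dots,p_m\le2$ with $\frac12\le\frac1{p_1}+\cdots+\frac1{p_m}\le1$. Let $E_1,\dots,E_m,F$ be Banach spaces. Then every $T\in\mathcal{L}^{multi}_{al,(p_1,\dots,p_m)}(E_1,\dots,E_m;F)$ has multi-type $(p_1,\dots,p_m)$, and $\|T\|_{\tau^{multi}_{p_1,\dots,p_m}}\le\|T\|_{\mathcal{L}^{multi}_{al,(p_1,\dots,p_m)}}$; that is, $\mathcal{L}^{multi}_{al,(p_1,\dots,p_m)}(E_1,\dots,E_m;F)\overset{1}{\hookrightarrow}\tau^{multi}_{p_1,\dots,p_m}(E_1,\dots,E_m;F)$.
   Context: $\ell_p(E)$ is the space of $p$-summable sequences with $\|(x_j)\|_p=(\sum\|x_j\|^p)^{1/p}$; $\ell_p^u(E)$ is the space of weakly $p$-summable sequences $(x_j)$ (with $\|(x_j)\|_{w,p}:=\sup_{\varphi\in B_{E'}}(\sum_j|\varphi(x_j)|^p)^{1/p}$) such that $\|(x_j)_{j\ge n}\|_{w,p}\to0$, normed by $\|\cdot\|_{w,p}$. $r_j$ is the $j$-th Rademacher function. $Rad(F;\mathbb{N}^m)$ is the space of $F$-valued $m$-indexed families $(y_{j_1,\dots,j_m})$ such that $\sum_{j_1,\dots,j_m=1}^{n_1,\dots,n_m}r_{j_1}(t_1)\cdots r_{j_m}(t_m)y_{j_1,\dots,j_m}$ converges in $L_2([0,1]^m;F)$, normed by $\left(\int_{[0,1]^m}\|\sum r_{j_1}(t_1)\cdots r_{j_m}(t_m)y_{j_1,\dots,j_m}\|^2dt\right)^{1/2}$.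 $\mathcal{L}^{multi}_{al,(p_1,\dots,p_m)}(E_1,\dots,E_m;F)$ (multiple almost $(p_1,\dots,p_m)$-summing operators) is the space of continuous $m$-linear $T$ with $(T(x^{(1)}_{j_1},\dots,x^{(m)}_{j_m}))_{j_1,\dots,j_m}\in Rad(F;\mathbb{N}^m)$ whenever $(x^{(i)}_j)_j\in\ell^u_{p_i}(E_i)$, normed by the operator norm of the induced continuous $m$-linear map $\ell^u_{p_1}(E_1)\times\cdots\times\ell^u_{p_m}(E_m)\to Rad(F;\mathbb{N}^m)$. $T$ has multi-type $(p_1,\dots,p_m)$ if there is $C>0$ with $\|(T(x^{(1)}_{j_1},\dots,x^{(m)}_{j_m}))_{j_1,\dots,j_m=1}^{n_1,\dots,n_m}\|_{Rad(F;\mathbb{N}^m)}\le C\prod_i\|(x^{(i)}_j)_{j=1}^{n_i}\|_{p_i}$ for all finite choices of vectors; $\tau^{multi}_{p_1,\dots,p_m}(E_1,\dots,E_m;F)$ is the space of such $T$ and $\|T\|_{\tau^{multi}_{p_1,\dots,p_m}}$ the infimum of such constants $C$. *)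

theory Defs
  imports "HOL-Analysis.Analysis" "HOL-Probability.Probability"
begin

text \<open>Sequences are indexed from 0: the sequence (x_j) with j \<ge> 1 of the
paper is represented by x :: nat \<Rightarrow> 'e with x k = x_(k+1); accordingly the k-th term
is paired with the Rademacher function r_(k+1).
The Banach spaces E_1,...,E_m are closed linear subspaces E 0, ..., E (m-1) of a common
real Banach space of type 'e; F is a real Banach space of type 'f.
An m-linear map is a function T :: (nat \<Rightarrow> 'e) \<Rightarrow> 'f depending only on its first m
arguments.\<close>

definition rademacher :: "nat \<Rightarrow> real \<Rightarrow> real" where
  "rademacher j t = sgn (sin (2 ^ j * pi * t))"

definition unit_cube :: "nat \<Rightarrow> (nat \<Rightarrow> real) measure" where
  "unit_cube m = PiM {..<m} (\<lambda>_. restrict_space lborel {0..1::real})"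

definition dual_ball :: "('e::real_normed_vector \<Rightarrow> real) set" where
  "dual_ball = {\<phi>. bounded_linear \<phi> \<and> onorm \<phi> \<le> 1}"

definition weakly_summable :: "real \<Rightarrow> (nat \<Rightarrow> 'e::real_normed_vector) \<Rightarrow> bool" where
  "weakly_summable p x \<longleftrightarrow>
     (\<forall>\<phi>. bounded_linear \<phi> \<longrightarrow> summable (\<lambda>j. \<bar>\<phi> (x j)\<bar> powr p)) \<and>
     bdd_above ((\<lambda>\<phi>. (\<Sum>j. \<bar>\<phi> (x j)\<bar> powr p) powr (1/p)) ` dual_ball)"

definition wnorm :: "real \<Rightarrow> (nat \<Rightarrow> 'e::real_normed_vector) \<Rightarrow> real" where
  "wnorm p x = (SUP \<phi>\<in>dual_ball. (\<Sum>j. \<bar>\<phi> (x j)\<bar> powr p) powr (1/p))"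

definition ell_u :: "real \<Rightarrow> 'e::real_normed_vector set \<Rightarrow> (nat \<Rightarrow> 'e) \<Rightarrow> bool" where
  "ell_u p E x \<longleftrightarrow> (\<forall>j. x j \<in> E) \<and> weakly_summable p x \<and>
     (\<lambda>n. wnorm p (\<lambda>j. x (j + n))) \<longlonglongrightarrow> 0"

definition radsum :: "nat \<Rightarrow> ((nat \<Rightarrow> nat) \<Rightarrow> 'f::real_normed_vector) \<Rightarrow> (nat \<Rightarrow> nat)
    \<Rightarrow> (nat \<Rightarrow> real) \<Rightarrow> 'f" where
  "radsum m y n t = (\<Sum>j\<in>PiE {..<m} (\<lambda>i. {..<n i}).
      (\<Prod>i<m. rademacher (j i + 1) (t i)) *\<^sub>R y j)"

definition rad_fin :: "nat \<Rightarrow> ((nat \<Rightarrow> nat) \<Rightarrow> 'f::real_normed_vector) \<Rightarrow> (nat \<Rightarrow> nat) \<Rightarrow> real" where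
  "rad_fin m y n = sqrt (integral\<^sup>L (unit_cube m) (\<lambda>t. (norm (radsum m y n t))\<^sup>2))"

definition rad_dist :: "nat \<Rightarrow> ((nat \<Rightarrow> nat) \<Rightarrow> 'f::real_normed_vector) \<Rightarrow> (nat \<Rightarrow> nat)
    \<Rightarrow> (nat \<Rightarrow> nat) \<Rightarrow> real" where
  "rad_dist m y n n' = sqrt (integral\<^sup>L (unit_cube m)
      (\<lambda>t. (norm (radsum m y n t - radsum m y n' t))\<^sup>2))"

text \<open>Membership in Rad(F;N^m): the partial sums converge in L_2([0,1]^m;F) as all
n_i \<rightarrow> \<infinity>; since L_2([0,1]^m;F) is complete (F Banach), this is the Cauchy condition.\<close>
definition in_rad :: "nat \<Rightarrow> ((nat \<Rightarrow> nat) \<Rightarrow> 'f::real_normed_vector) \<Rightarrow> bool" where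
  "in_rad m y \<longleftrightarrow> (\<forall>\<epsilon>>0. \<exists>N. \<forall>n n'. (\<forall>i<m. N \<le> n i \<and> N \<le> n' i) \<longrightarrow> rad_dist m y n n' < \<epsilon>)"

text \<open>Norm in Rad(F;N^m): L_2 norm of the limit, i.e. limit of the norms of the partial sums
(evaluated along the cofinal diagonal n_1 = ... = n_m = N).\<close>
definition rad_norm :: "nat \<Rightarrow> ((nat \<Rightarrow> nat) \<Rightarrow> 'f::real_normed_vector) \<Rightarrow> real" where
  "rad_norm m y = lim (\<lambda>N. rad_fin m y (\<lambda>_. N))"

definition cont_multilinear ::
    "nat \<Rightarrow> (nat \<Rightarrow> 'e::real_normed_vector set) \<Rightarrow> ((nat \<Rightarrow> 'e) \<Rightarrow> 'f::real_normed_vector) \<Rightarrow> bool" where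
  "cont_multilinear m E T \<longleftrightarrow>
     (\<forall>x y. (\<forall>i<m. x i = y i) \<longrightarrow> T x = T y) \<and>
     (\<forall>x i. i < m \<longrightarrow> (\<forall>k<m. x k \<in> E k) \<longrightarrow>
        (\<forall>u\<in>E i. \<forall>v\<in>E i. T (x(i := u + v)) = T (x(i := u)) + T (x(i := v))) \<and>
        (\<forall>u\<in>E i. \<forall>c. T (x(i := c *\<^sub>R u)) = c *\<^sub>R T (x(i := u)))) \<and>
     (\<exists>C. \<forall>x. (\<forall>i<m. x i \<in> E i) \<longrightarrow> norm (T x) \<le> C * (\<Prod>i<m. norm (x i)))"

text \<open>The m-indexed family (T(x^(1)_{j_1},...,x^(m)_{j_m})), with X i the sequence x^(i+1).\<close>
definition tfam :: "((nat \<Rightarrow> 'e) \<Rightarrow> 'f) \<Rightarrow> (nat \<Rightarrow> nat \<Rightarrow> 'e) \<Rightarrow> (nat \<Rightarrow> nat) \<Rightarrow> 'f" where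
  "tfam T X = (\<lambda>j. T (\<lambda>i. X i (j i)))"

definition multi_almost_summing ::
    "nat \<Rightarrow> (nat \<Rightarrow> real) \<Rightarrow> (nat \<Rightarrow> 'e::real_normed_vector set) \<Rightarrow> ((nat \<Rightarrow> 'e) \<Rightarrow> 'f::real_normed_vector) \<Rightarrow> bool" where
  "multi_almost_summing m p E T \<longleftrightarrow> cont_multilinear m E T \<and>
     (\<forall>X. (\<forall>i<m. ell_u (p i) (E i) (X i)) \<longrightarrow> in_rad m (tfam T X)) \<and>
     (\<exists>C. \<forall>X. (\<forall>i<m. ell_u (p i) (E i) (X i)) \<longrightarrow>
        rad_norm m (tfam T X) \<le> C * (\<Prod>i<m. wnorm (p i) (X i)))"

definition al_norm ::
    "nat \<Rightarrow> (nat \<Rightarrow> real) \<Rightarrow> (nat \<Rightarrow> 'e::real_normed_vector set) \<Rightarrow> ((nat \<Rightarrow> 'e) \<Rightarrow> 'f::real_normed_vector) \<Rightarrow> real" where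
  "al_norm m p E T = Sup {rad_norm m (tfam T X) | X.
      \<forall>i<m. ell_u (p i) (E i) (X i) \<and> wnorm (p i) (X i) \<le> 1}"

definition multi_type_const ::
    "nat \<Rightarrow> (nat \<Rightarrow> real) \<Rightarrow> (nat \<Rightarrow> 'e::real_normed_vector set) \<Rightarrow> ((nat \<Rightarrow> 'e) \<Rightarrow> 'f::real_normed_vector) \<Rightarrow> real \<Rightarrow> bool" where
  "multi_type_const m p E T C \<longleftrightarrow> C > 0 \<and>
     (\<forall>n X. (\<forall>i<m. \<forall>j<n i. X i j \<in> E i) \<longrightarrow>
        rad_fin m (tfam T X) n \<le> C * (\<Prod>i<m. (\<Sum>j<n i. norm (X i j) powr p i) powr (1 / p i)))"

definition has_multi_type ::
    "nat \<Rightarrow> (nat \<Rightarrow> real) \<Rightarrow> (nat \<Rightarrow> 'e::real_normed_vector set) \<Rightarrow> ((nat \<Rightarrow> 'e) \<Rightarrow> 'f::real_normed_vector) \<Rightarrow> bool" where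
  "has_multi_type m p E T \<longleftrightarrow> (\<exists>C. multi_type_const m p E T C)"

definition tau_norm ::
    "nat \<Rightarrow> (nat \<Rightarrow> real) \<Rightarrow> (nat \<Rightarrow> 'e::real_normed_vector set) \<Rightarrow> ((nat \<Rightarrow> 'e) \<Rightarrow> 'f::real_normed_vector) \<Rightarrow> real" where
  "tau_norm m p E T = Inf {C. multi_type_const m p E T C}"

end

theory Submission
  imports Defs
begin

text \<open>Since \<open>\<bar>\<phi> x\<bar> \<le> \<parallel>x\<parallel>\<close> on the dual ball, the weak \<open>p\<close>-norm of a finitely supported sequence is at
most its \<open>\<ell>_p\<close>-norm. Given finite families \<open>x^(i)\<close> with \<open>\<ell>_p\<close>-norms \<open>s_i\<close>, scale them by
\<open>1/(s_i + \<epsilon>)\<close> and extend them by zeros: the results lie in \<open>\<ell>_p\<^sup>u(E_i)\<close> with weak norm at most 1,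
and the Rademacher norm of a finitely supported family is its finite Rademacher average.
Multilinearity then gives the type inequality with constant \<open>\<parallel>T\<parallel>_al\<close> up to the factor
\<open>\<Prod>(s_i + \<epsilon>)\<close>, and \<open>\<epsilon> \<rightarrow> 0\<close> finishes the proof.\<close>

lemma zero_in_dual_ball: "(\<lambda>_. 0) \<in> dual_ball"
  by (simp add: dual_ball_def onorm_zero)

lemma dual_ball_abs_le_norm:
  assumes "\<phi> \<in> dual_ball"
  shows "\<bar>\<phi> v\<bar> \<le> norm v"
proof -
  have lin: "bounded_linear \<phi>" and le1: "onorm \<phi> \<le> 1"
    using assms by (auto simp: dual_ball_def)
  have "norm (\<phi> v) \<le> onorm \<phi> * norm v" by (rule onorm[OF lin])
  also have "\<dots> \<le> norm v" using le1 by (intro mult_left_le_one_le) (auto simp: onorm_pos_le[OF lin])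
  finally show ?thesis by simp
qed

lemma dual_ball_sum_le_finite_support:
  assumes "\<forall>j\<ge>N. y j = 0" "p > 0" "\<phi> \<in> dual_ball"
  shows "(\<Sum>j. \<bar>\<phi> (y j)\<bar> powr p) powr (1/p) \<le> (\<Sum>j<N. norm (y j) powr p) powr (1/p)"
proof -
  have "linear \<phi>" using assms(3) by (auto simp: dual_ball_def bounded_linear.linear)
  then have finite_sum: "(\<Sum>j. \<bar>\<phi> (y j)\<bar> powr p) = (\<Sum>j<N. \<bar>\<phi> (y j)\<bar> powr p)"
    using assms(1) by (intro suminf_finite) (auto simp: linear_0)
  also have "\<dots> \<le> (\<Sum>j<N. norm (y j) powr p)"
    using assms by (intro sum_mono powr_mono2) (auto simp: dual_ball_abs_le_norm)
  finally show ?thesis by (intro powr_mono2) (use assms finite_sum in \<open>auto intro: sum_nonneg\<close>)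
qed

lemma wnorm_le_finite_support:
  assumes "\<forall>j\<ge>N. y j = 0" "p > 0"
  shows "wnorm p y \<le> (\<Sum>j<N. norm (y j) powr p) powr (1/p)"
  unfolding wnorm_def
  using zero_in_dual_ball dual_ball_sum_le_finite_support[OF assms] by (auto intro: cSUP_least)

lemma wnorm_zero [simp]: "wnorm p (\<lambda>_. 0::'a::real_normed_vector) = 0"
proof -
  have "wnorm p (\<lambda>_. 0::'a) = (SUP \<phi>\<in>(dual_ball :: ('a \<Rightarrow> real) set). 0)"
    unfolding wnorm_def
    by (rule SUP_cong) (auto simp: dual_ball_def linear_0 bounded_linear.linear)
  also have "\<dots> = 0" using zero_in_dual_ball by (auto intro: cSUP_const)
  finally show ?thesis .
qed

lemma wnorm_nonneg: "weakly_summable p x \<Longrightarrow> wnorm p x \<ge> 0"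
  unfolding wnorm_def
  by (rule cSUP_upper2[OF _ zero_in_dual_ball]) (auto simp: weakly_summable_def)

lemma ell_u_finite_support:
  assumes "\<forall>j. y j \<in> E" "\<forall>j\<ge>N. y j = 0" "p > 0"
  shows "ell_u p E y"
  unfolding ell_u_def weakly_summable_def
proof (intro conjI allI impI)
  fix \<phi> :: "'a \<Rightarrow> real" assume "bounded_linear \<phi>"
  then show "summable (\<lambda>j. \<bar>\<phi> (y j)\<bar> powr p)"
    using assms(2) by (intro summable_finite[of "{..<N}"]) (auto simp: linear_0 bounded_linear.linear)
next
  show "bdd_above ((\<lambda>\<phi>. (\<Sum>j. \<bar>\<phi> (y j)\<bar> powr p) powr (1 / p)) ` dual_ball)"
    using dual_ball_sum_le_finite_support[OF assms(2,3)] by (auto intro!: bdd_aboveI2)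
next
  have "\<forall>\<^sub>F n in sequentially. wnorm p (\<lambda>j. y (j + n)) = 0"
    unfolding eventually_sequentially using assms(2) by (auto intro!: exI[of _ N])
  then show "(\<lambda>n. wnorm p (\<lambda>j. y (j + n))) \<longlonglongrightarrow> 0" by (rule tendsto_eventually)
qed (use assms in auto)

lemma cont_multilinear_cong: "cont_multilinear m E T \<Longrightarrow> (\<forall>i<m. x i = y i) \<Longrightarrow> T x = T y"
  unfolding cont_multilinear_def by blast

lemma cont_multilinear_zero_arg:
  assumes ml: "cont_multilinear m E T" and sub: "\<forall>k<m. subspace (E k)"
    and x: "\<forall>k<m. x k \<in> E k" and i: "i < m" "x i = 0"
  shows "T x = 0"
proof -
  have "0 \<in> E i" using sub i by (simp add: subspace_0)
  then have "T (x(i := (0::real) *\<^sub>R 0)) = (0::real) *\<^sub>R T (x(i := 0))"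
    using ml x i unfolding cont_multilinear_def by blast
  then show ?thesis using i by (simp add: fun_upd_idem)
qed

lemma cont_multilinear_scaleR_prefix:
  assumes ml: "cont_multilinear m E T" and sub: "\<forall>k<m. subspace (E k)"
    and x: "\<forall>k<m. x k \<in> E k" and "k \<le> m"
  shows "T (\<lambda>i. if i < k then c i *\<^sub>R x i else x i) = (\<Prod>i<k. c i) *\<^sub>R T x"
  using \<open>k \<le> m\<close>
proof (induction k)
  case 0
  then show ?case by simp
next
  case (Suc k)
  define x' where "x' = (\<lambda>i. if i < k then c i *\<^sub>R x i else x i)"
  have "\<forall>j<m. x' j \<in> E j" using x sub by (auto simp: x'_def subspace_scale)
  moreover have "x k \<in> E k" "k < m" using x Suc.prems by auto
  ultimately have "T (x'(k := c k *\<^sub>R x k)) = c k *\<^sub>R T (x'(k := x k))"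
    using ml unfolding cont_multilinear_def by auto
  moreover have "x'(k := x k) = x'" by (auto simp: x'_def)
  moreover have "x'(k := c k *\<^sub>R x k) = (\<lambda>i. if i < Suc k then c i *\<^sub>R x i else x i)"
    by (auto simp: x'_def)
  ultimately show ?case using Suc by (simp add: x'_def)
qed

lemma cont_multilinear_scaleR:
  assumes ml: "cont_multilinear m E T" and sub: "\<forall>k<m. subspace (E k)"
    and x: "\<forall>k<m. x k \<in> E k"
  shows "T (\<lambda>i. c i *\<^sub>R x i) = (\<Prod>i<m. c i) *\<^sub>R T x"
proof -
  have "T (\<lambda>i. c i *\<^sub>R x i) = T (\<lambda>i. if i < m then c i *\<^sub>R x i else x i)"
    using ml by (auto intro: cont_multilinear_cong)
  then show ?thesis using cont_multilinear_scaleR_prefix[OF assms order_refl] by simp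
qed

lemma rad_fin_scaleR:
  assumes "\<And>t. radsum m y n t = a *\<^sub>R radsum m z n t"
  shows "rad_fin m y n = \<bar>a\<bar> * rad_fin m z n"
proof -
  have "(\<lambda>t. (norm (radsum m y n t))\<^sup>2) = (\<lambda>t. a\<^sup>2 * (norm (radsum m z n t))\<^sup>2)"
    using assms by (auto simp: power_mult_distrib)
  then show ?thesis unfolding rad_fin_def by (simp add: real_sqrt_mult)
qed

lemma radsum_mono_box_vanishing:
  assumes "\<forall>i<m. n i \<le> N i"
    and "\<forall>j\<in>PiE {..<m} (\<lambda>i. {..<N i}) - PiE {..<m} (\<lambda>i. {..<n i}). y j = 0"
  shows "radsum m y N t = radsum m y n t"
  unfolding radsum_def
  using assms by (intro sum.mono_neutral_right) (auto simp: finite_PiE intro!: PiE_mono)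

lemma rad_norm_eq_rad_fin_finite_support:
  assumes ml: "cont_multilinear m E T" and sub: "\<forall>k<m. subspace (E k)"
    and Y: "\<forall>i<m. \<forall>j. Y i j \<in> E i" and Y0: "\<forall>i<m. \<forall>j\<ge>n i. Y i j = 0"
  shows "rad_norm m (tfam T Y) = rad_fin m (tfam T Y) n"
proof -
  have "rad_fin m (tfam T Y) (\<lambda>_. N) = rad_fin m (tfam T Y) n" if "N \<ge> (\<Sum>i<m. n i)" for N
  proof -
    have "\<forall>i<m. n i \<le> N"
      using that by (metis finite_lessThan lessThan_iff member_le_sum order_trans zero_le)
    moreover have "tfam T Y j = 0"
      if j: "j \<in> PiE {..<m} (\<lambda>_. {..<N}) - PiE {..<m} (\<lambda>i. {..<n i})" for j
    proof -
      obtain i where "i < m" "j i \<ge> n i" using j by (auto simp: PiE_iff)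
      then show ?thesis
        unfolding tfam_def using Y Y0 by (intro cont_multilinear_zero_arg[OF ml sub, of _ i]) auto
    qed
    ultimately show ?thesis
      unfolding rad_fin_def by (simp add: radsum_mono_box_vanishing)
  qed
  then have "(\<lambda>N. rad_fin m (tfam T Y) (\<lambda>_. N)) \<longlonglongrightarrow> rad_fin m (tfam T Y) n"
    by (intro tendsto_eventually) (auto simp: eventually_sequentially)
  then show ?thesis unfolding rad_norm_def by (rule limI)
qed

lemma bdd_above_al_norm_set:
  assumes "multi_almost_summing m p E T"
  shows "bdd_above {rad_norm m (tfam T X) | X.
      \<forall>i<m. ell_u (p i) (E i) (X i) \<and> wnorm (p i) (X i) \<le> 1}"
proof -
  obtain C where C: "\<forall>X. (\<forall>i<m. ell_u (p i) (E i) (X i)) \<longrightarrow>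
        rad_norm m (tfam T X) \<le> C * (\<Prod>i<m. wnorm (p i) (X i))"
    using assms unfolding multi_almost_summing_def by blast
  have "rad_norm m (tfam T X) \<le> \<bar>C\<bar>"
    if X: "\<forall>i<m. ell_u (p i) (E i) (X i) \<and> wnorm (p i) (X i) \<le> 1" for X
  proof -
    have "\<forall>i<m. 0 \<le> wnorm (p i) (X i)"
      using X wnorm_nonneg unfolding ell_u_def by blast
    then have P0: "0 \<le> (\<Prod>i<m. wnorm (p i) (X i))" and P1: "(\<Prod>i<m. wnorm (p i) (X i)) \<le> 1"
      using X by (auto intro: prod_nonneg prod_le_1)
    have "rad_norm m (tfam T X) \<le> C * (\<Prod>i<m. wnorm (p i) (X i))" using C X by auto
    also have "\<dots> \<le> \<bar>C\<bar> * (\<Prod>i<m. wnorm (p i) (X i))"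
      using P0 by (intro mult_right_mono) auto
    also have "\<dots> \<le> \<bar>C\<bar>" using P0 P1 by (simp add: mult_left_le)
    finally show ?thesis .
  qed
  then show ?thesis by (intro bdd_aboveI) blast
qed

lemma rad_norm_le_al_norm:
  assumes "multi_almost_summing m p E T"
    and "\<forall>i<m. ell_u (p i) (E i) (Y i) \<and> wnorm (p i) (Y i) \<le> 1"
  shows "rad_norm m (tfam T Y) \<le> al_norm m p E T"
  unfolding al_norm_def
  using assms by (intro cSup_upper[OF _ bdd_above_al_norm_set]) auto

lemma al_norm_nonneg:
  assumes mas: "multi_almost_summing m p E T"
    and sub: "\<forall>k<m. subspace (E k)" and pos: "\<forall>i<m. p i > 0"
  shows "al_norm m p E T \<ge> 0"
proof -
  have ml: "cont_multilinear m E T" using mas by (simp add: multi_almost_summing_def)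
  define Z where "Z = (\<lambda>(i::nat) (j::nat). 0::'a)"
  have ZE: "\<forall>i<m. \<forall>j. Z i j \<in> E i" using sub by (simp add: Z_def subspace_0)
  have "0 \<le> rad_fin m (tfam T Z) (\<lambda>_. 0)" by (simp add: rad_fin_def)
  also have "\<dots> = rad_norm m (tfam T Z)"
    by (rule rad_norm_eq_rad_fin_finite_support[OF ml sub ZE, symmetric]) (simp add: Z_def)
  also have "\<dots> \<le> al_norm m p E T"
    using ZE pos by (intro rad_norm_le_al_norm[OF mas]) (auto simp: Z_def intro!: ell_u_finite_support)
  finally show ?thesis .
qed

lemma wnorm_scaled_truncation_le_1:
  assumes "p > 0" "c > 0" "c * (\<Sum>j<N. norm (x j) powr p) powr (1/p) \<le> 1"
  shows "wnorm p (\<lambda>j. if j < N then c *\<^sub>R x j else 0) \<le> 1"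
proof -
  have "wnorm p (\<lambda>j. if j < N then c *\<^sub>R x j else 0)
      \<le> (\<Sum>j<N. norm (c *\<^sub>R x j) powr p) powr (1/p)"
    using assms(1) by (intro order_trans[OF wnorm_le_finite_support[of N]]) auto
  also have "(\<Sum>j<N. norm (c *\<^sub>R x j) powr p) = c powr p * (\<Sum>j<N. norm (x j) powr p)"
    using assms(2) by (simp add: sum_distrib_left powr_mult)
  also have "(c powr p * (\<Sum>j<N. norm (x j) powr p)) powr (1/p)
      = c * (\<Sum>j<N. norm (x j) powr p) powr (1/p)"
    using assms(1,2) by (simp add: powr_mult powr_powr sum_nonneg)
  finally show ?thesis using assms(3) by simp
qed

lemma radsum_tfam_scaled_truncation:
  assumes ml: "cont_multilinear m E T" and sub: "\<forall>k<m. subspace (E k)"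
    and X: "\<forall>i<m. \<forall>j<n i. X i j \<in> E i"
  shows "radsum m (tfam T (\<lambda>i j. if j < n i then c i *\<^sub>R X i j else 0)) n t
      = (\<Prod>i<m. c i) *\<^sub>R radsum m (tfam T X) n t"
  unfolding radsum_def scaleR_sum_right
proof (rule sum.cong[OF refl])
  fix j assume j: "j \<in> PiE {..<m} (\<lambda>i. {..<n i})"
  have "tfam T (\<lambda>i j. if j < n i then c i *\<^sub>R X i j else 0) j = T (\<lambda>i. c i *\<^sub>R X i (j i))"
    unfolding tfam_def using j by (intro cont_multilinear_cong[OF ml]) (auto simp: PiE_iff)
  also have "\<dots> = (\<Prod>i<m. c i) *\<^sub>R tfam T X j"
    unfolding tfam_def using X j by (intro cont_multilinear_scaleR[OF ml sub]) (auto simp: PiE_iff)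
  finally show "(\<Prod>i<m. rademacher (j i + 1) (t i)) *\<^sub>R
      tfam T (\<lambda>i j. if j < n i then c i *\<^sub>R X i j else 0) j =
    (\<Prod>i<m. c i) *\<^sub>R (\<Prod>i<m. rademacher (j i + 1) (t i)) *\<^sub>R tfam T X j" by simp
qed

lemma rad_fin_le_al_norm_eps:
  assumes mas: "multi_almost_summing m p E T"
    and sub: "\<forall>k<m. subspace (E k)" and pos: "\<forall>i<m. p i > 0"
    and X: "\<forall>i<m. \<forall>j<n i. X i j \<in> E i" and e: "e > 0"
  shows "rad_fin m (tfam T X) n \<le> al_norm m p E T *
           (\<Prod>i<m. (\<Sum>j<n i. norm (X i j) powr p i) powr (1/p i) + e)"
proof -
  have ml: "cont_multilinear m E T" using mas by (simp add: multi_almost_summing_def)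
  define s where "s = (\<lambda>i. (\<Sum>j<n i. norm (X i j) powr p i) powr (1/p i))"
  define c where "c = (\<lambda>i. 1 / (s i + e))"
  have s0: "s i \<ge> 0" for i by (simp add: s_def)
  have c0: "c i > 0" for i using s0[of i] e by (simp add: c_def)
  define Y where "Y = (\<lambda>i j. if j < n i then c i *\<^sub>R X i j else 0)"
  have YE: "\<forall>i<m. \<forall>j. Y i j \<in> E i"
    using X sub by (auto simp: Y_def subspace_scale subspace_0)
  have Y0: "\<forall>i<m. \<forall>j\<ge>n i. Y i j = 0" by (auto simp: Y_def)
  have "wnorm (p i) (Y i) \<le> 1" if "i < m" for i
    unfolding Y_def using that pos c0 s0[of i] e
    by (intro wnorm_scaled_truncation_le_1) (auto simp: c_def s_def)
  then have "rad_norm m (tfam T Y) \<le> al_norm m p E T"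
    using YE Y0 pos by (intro rad_norm_le_al_norm[OF mas]) (auto intro!: ell_u_finite_support)
  moreover have "rad_norm m (tfam T Y) = rad_fin m (tfam T Y) n"
    by (rule rad_norm_eq_rad_fin_finite_support[OF ml sub YE Y0])
  moreover have "rad_fin m (tfam T Y) n = rad_fin m (tfam T X) n / (\<Prod>i<m. s i + e)"
    unfolding Y_def using c0 s0 e
    by (simp add: rad_fin_scaleR[OF radsum_tfam_scaled_truncation[OF ml sub X]] c_def
        prod_dividef abs_prod add_nonneg_pos less_imp_le)
  ultimately show ?thesis
    using s0 e by (simp add: pos_divide_le_eq prod_pos add_nonneg_pos s_def mult.commute)
qed

lemma rad_fin_le_al_norm:
  assumes "multi_almost_summing m p E T"
    and "\<forall>k<m. subspace (E k)" and "\<forall>i<m. p i > 0"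
    and "\<forall>i<m. \<forall>j<n i. X i j \<in> E i"
  shows "rad_fin m (tfam T X) n \<le> al_norm m p E T *
           (\<Prod>i<m. (\<Sum>j<n i. norm (X i j) powr p i) powr (1/p i))"
proof -
  define s where "s = (\<lambda>i. (\<Sum>j<n i. norm (X i j) powr p i) powr (1/p i))"
  have "((\<lambda>e. al_norm m p E T * (\<Prod>i<m. s i + e)) \<longlongrightarrow> al_norm m p E T * (\<Prod>i<m. s i + 0))
          (at_right 0)"
    by (intro tendsto_intros)
  moreover have "\<forall>\<^sub>F e in at_right 0. rad_fin m (tfam T X) n \<le> al_norm m p E T * (\<Prod>i<m. s i + e)"
    using rad_fin_le_al_norm_eps[OF assms] unfolding s_def
    by (intro eventually_mono[OF eventually_at_right_less]) simp
  ultimately have "rad_fin m (tfam T X) n \<le> al_norm m p E T * (\<Prod>i<m. s i + 0)"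
    by (intro tendsto_le[OF trivial_limit_at_right_real _ tendsto_const])
  then show ?thesis by (simp add: s_def)
qed

lemma multi_type_const_gt_al_norm:
  assumes mas: "multi_almost_summing m p E T"
    and sub: "\<forall>k<m. subspace (E k)" and pos: "\<forall>i<m. p i > 0"
    and C: "C > al_norm m p E T"
  shows "multi_type_const m p E T C"
  unfolding multi_type_const_def
proof (intro conjI allI impI)
  show "C > 0" using al_norm_nonneg[OF mas sub pos] C by simp
  fix n :: "nat \<Rightarrow> nat" and X assume X: "\<forall>i<m. \<forall>j<n i. X i j \<in> E i"
  have "rad_fin m (tfam T X) n
      \<le> al_norm m p E T * (\<Prod>i<m. (\<Sum>j<n i. norm (X i j) powr p i) powr (1 / p i))"
    using rad_fin_le_al_norm[OF mas sub pos X] by simp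
  also have "\<dots> \<le> C * (\<Prod>i<m. (\<Sum>j<n i. norm (X i j) powr p i) powr (1 / p i))"
    using C by (intro mult_right_mono prod_nonneg) auto
  finally show "rad_fin m (tfam T X) n
      \<le> C * (\<Prod>i<m. (\<Sum>j<n i. norm (X i j) powr p i) powr (1 / p i))" .
qed

lemma tau_norm_le:
  assumes "\<And>e. e > 0 \<Longrightarrow> multi_type_const m p E T (C + e)"
  shows "tau_norm m p E T \<le> C"
proof (rule field_le_epsilon)
  have "bdd_below {C. multi_type_const m p E T C}"
    by (rule bdd_belowI[of _ 0]) (auto simp: multi_type_const_def)
  then show "tau_norm m p E T \<le> C + e" if "e > 0" for e
    unfolding tau_norm_def using assms[OF that] by (intro cInf_lower) auto
qed

theorem proposition4p4:
  fixes m :: nat and p :: "nat \<Rightarrow> real"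
    and E :: "nat \<Rightarrow> 'e::banach set"
    and T :: "(nat \<Rightarrow> 'e) \<Rightarrow> 'f::banach"
  assumes "m \<ge> 2"
    and "\<forall>i<m. 1 < p i \<and> p i \<le> 2"
    and "1/2 \<le> (\<Sum>i<m. 1 / p i)" and "(\<Sum>i<m. 1 / p i) \<le> 1"
    and "\<forall>i<m. subspace (E i) \<and> closed (E i)"
    and "multi_almost_summing m p E T"
  shows "has_multi_type m p E T \<and> tau_norm m p E T \<le> al_norm m p E T"
proof -
  have sub: "\<forall>k<m. subspace (E k)" using assms(5) by auto
  have pos: "\<forall>i<m. p i > 0" using assms(2) by force
  have type_const: "multi_type_const m p E T (al_norm m p E T + e)" if "e > 0" for e
    using that by (intro multi_type_const_gt_al_norm[OF assms(6) sub pos]) simp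
  then have "has_multi_type m p E T"
    unfolding has_multi_type_def by (meson zero_less_one)
  moreover have "tau_norm m p E T \<le> al_norm m p E T"
    by (rule tau_norm_le) (rule type_const)
  ultimately show ?thesis ..
qed

end
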